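(* Let $0\to\mathfrak{r}\to\mathfrak{f}\xrightarrow{\rho}\mathfrak{g}\to0$ be a free presentation of a Leibniz algebra $\mathfrak{g}$ and let $0\to\mathfrak{m}\to\mathfrak{p}\xrightarrow{\psi}\mathfrak{q}\to0$ be a $\mathrm{Lie}$-central extension of a Leibniz algebra $\mathfrak{q}$. Then for each homomorphism $\alpha:\mathfrak{g}\to\mathfrak{q}$ there exists a homomorphism $\beta:\mathfrak{f}/[\mathfrak{f},\mathfrak{r}]_{\mathrm{Lie}}\to\mathfrak{p}$ such that $\beta(\mathfrak{r}/[\mathfrak{f},\mathfrak{r}]_{\mathrm{Lie}})\subseteq\mathfrak{m}$ and $\psi\circ\beta=\alpha\circ\overline{\rho}$, where $\overline{\rho}:\mathfrak{f}/[\mathfrak{f},\mathfrak{r}]_{\mathrm{Lie}}\to\mathfrak{g}$ is the epimorphism induced by $\rho$.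
   Context: Fix a field $\mathbb{K}$ with $\frac12\in\mathbb{K}$. A Leibniz algebra is a $\mathbb{K}$-vector space with a bilinear bracket satisfying $[x,[y,z]]=[[x,y],z]-[[x,z],y]$. For two-sided ideals $\mathfrak{m},\mathfrak{n}$, $[\mathfrak{m},\mathfrak{n}]_{\mathrm{Lie}}$ is the subspace spanned by all $[m,n]+[n,m]$. $Z_{\mathrm{Lie}}(\mathfrak{p})=\{z:[x,z]+[z,x]=0\ \forall x\in\mathfrak{p}\}$; a short exact sequence $0\to\mathfrak{m}\to\mathfrak{p}\to\mathfrak{q}\to0$ is a $\mathrm{Lie}$-central extension if $\mathfrak{m}\subseteq Z_{\mathrm{Lie}}(\mathfrak{p})$. A free presentation of $\mathfrak{g}$ is a short exact sequence $0\to\mathfrak{r}\to\mathfrak{f}\to\mathfrak{g}\to0$ with $\mathfrak{f}$ a free Leibniz algebra. *)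

theory Defs
  imports Complex_Main
begin

text \<open>A Leibniz algebra over a field 'k is represented by an abelian group type 'a
  (the whole type is the underlying vector space) together with a scalar
  multiplication sc and a bracket br.\<close>

definition leibniz_algebra ::
  "('k::field \<Rightarrow> 'a::ab_group_add \<Rightarrow> 'a) \<Rightarrow> ('a \<Rightarrow> 'a \<Rightarrow> 'a) \<Rightarrow> bool" where
  "leibniz_algebra sc br \<longleftrightarrow>
     vector_space sc \<and>
     (\<forall>x. Vector_Spaces.linear sc sc (br x)) \<and>
     (\<forall>y. Vector_Spaces.linear sc sc (\<lambda>x. br x y)) \<and>
     (\<forall>x y z. br x (br y z) = br (br x y) z - br (br x z) y)"

definition leibniz_hom ::
  "('k::field \<Rightarrow> 'a::ab_group_add \<Rightarrow> 'a) \<Rightarrow> ('a \<Rightarrow> 'a \<Rightarrow> 'a) \<Rightarrow>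
   ('k \<Rightarrow> 'b::ab_group_add \<Rightarrow> 'b) \<Rightarrow> ('b \<Rightarrow> 'b \<Rightarrow> 'b) \<Rightarrow> ('a \<Rightarrow> 'b) \<Rightarrow> bool" where
  "leibniz_hom sc1 br1 sc2 br2 h \<longleftrightarrow>
     Vector_Spaces.linear sc1 sc2 h \<and> (\<forall>x y. h (br1 x y) = br2 (h x) (h y))"

definition leibniz_ideal ::
  "('k::field \<Rightarrow> 'a::ab_group_add \<Rightarrow> 'a) \<Rightarrow> ('a \<Rightarrow> 'a \<Rightarrow> 'a) \<Rightarrow> 'a set \<Rightarrow> bool" where
  "leibniz_ideal sc br I \<longleftrightarrow>
     module.subspace sc I \<and> (\<forall>x i. i \<in> I \<longrightarrow> br x i \<in> I \<and> br i x \<in> I)"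

definition leibniz_subalgebra ::
  "('k::field \<Rightarrow> 'a::ab_group_add \<Rightarrow> 'a) \<Rightarrow> ('a \<Rightarrow> 'a \<Rightarrow> 'a) \<Rightarrow> 'a set \<Rightarrow> bool" where
  "leibniz_subalgebra sc br S \<longleftrightarrow>
     module.subspace sc S \<and> (\<forall>x\<in>S. \<forall>y\<in>S. br x y \<in> S)"

definition generated_subalgebra ::
  "('k::field \<Rightarrow> 'a::ab_group_add \<Rightarrow> 'a) \<Rightarrow> ('a \<Rightarrow> 'a \<Rightarrow> 'a) \<Rightarrow> 'a set \<Rightarrow> 'a set" where
  "generated_subalgebra sc br X = \<Inter>{S. leibniz_subalgebra sc br S \<and> X \<subseteq> S}"

definition lie_comm ::
  "('k::field \<Rightarrow> 'a::ab_group_add \<Rightarrow> 'a) \<Rightarrow> ('a \<Rightarrow> 'a \<Rightarrow> 'a) \<Rightarrow> 'a set \<Rightarrow> 'a set \<Rightarrow> 'a set" where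
  "lie_comm sc br M N = module.span sc {br m n + br n m | m n. m \<in> M \<and> n \<in> N}"

definition lie_center :: "('a::ab_group_add \<Rightarrow> 'a \<Rightarrow> 'a) \<Rightarrow> 'a set" where
  "lie_center br = {z. \<forall>x. br x z + br z x = 0}"

text \<open>HOL cannot quantify over types inside a formula, so the
  universal property is stated for target algebras carried by the type named
  by the itself-argument.\<close>
definition free_leibniz_on ::
  "('k::field \<Rightarrow> 'a::ab_group_add \<Rightarrow> 'a) \<Rightarrow> ('a \<Rightarrow> 'a \<Rightarrow> 'a) \<Rightarrow> 'a set \<Rightarrow>
   'b::ab_group_add itself \<Rightarrow> bool" where
  "free_leibniz_on sc br X (T :: 'b itself) \<longleftrightarrow>
     leibniz_algebra sc br \<and>
     generated_subalgebra sc br X = UNIV \<and>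
     (\<forall>(sc2 :: 'k \<Rightarrow> 'b \<Rightarrow> 'b) br2 (g :: 'a \<Rightarrow> 'b). leibniz_algebra sc2 br2 \<longrightarrow>
        (\<exists>h. leibniz_hom sc br sc2 br2 h \<and> (\<forall>x\<in>X. h x = g x)))"

end

theory Submission
  imports Defs
begin

text \<open>
  A free Leibniz algebra is projective: a homomorphism from it into the base of a surjective
  homomorphism lifts through that surjection, since lifts of the generators extend to a
  homomorphism, and two homomorphisms agreeing on generators agree on the subalgebra they
  generate.  Lifting \<open>\<alpha> \<circ> \<rho>\<close> along \<open>\<psi>\<close> gives \<open>\<beta>\<close>; it maps \<open>r = ker \<rho>\<close> into
  \<open>m = ker \<psi>\<close>, and since \<open>m\<close> is \<open>Lie\<close>-central, \<open>\<beta>\<close> kills every symmetric bracket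
  \<open>[f, n] + [n, f]\<close> with \<open>n \<in> r\<close>, hence their span \<open>[f, r]\<^sub>L\<^sub>i\<^sub>e\<close>.
\<close>

lemma leibniz_hom_comp:
  assumes "leibniz_hom sc1 br1 sc2 br2 f" and "leibniz_hom sc2 br2 sc3 br3 g"
  shows "leibniz_hom sc1 br1 sc3 br3 (g \<circ> f)"
  using assms by (auto simp: leibniz_hom_def intro: Vector_Spaces.linear_compose)

lemma leibniz_subalgebra_equalizer:
  assumes f: "leibniz_hom sc1 br1 sc2 br2 f" and g: "leibniz_hom sc1 br1 sc2 br2 g"
  shows "leibniz_subalgebra sc1 br1 {x. f x = g x}"
proof -
  interpret f: Vector_Spaces.linear sc1 sc2 f using f by (simp add: leibniz_hom_def)
  interpret g: Vector_Spaces.linear sc1 sc2 g using g by (simp add: leibniz_hom_def)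
  show ?thesis
    using f g
    by (auto simp: leibniz_subalgebra_def leibniz_hom_def f.vs1.subspace_def
        f.add g.add f.scale g.scale f.zero g.zero)
qed

lemma generated_subalgebra_minimal:
  assumes "leibniz_subalgebra sc br S" and "X \<subseteq> S"
  shows "generated_subalgebra sc br X \<subseteq> S"
  using assms unfolding generated_subalgebra_def by blast

lemma leibniz_hom_eq_on_generated:
  assumes "leibniz_hom sc1 br1 sc2 br2 f" and "leibniz_hom sc1 br1 sc2 br2 g"
    and "\<And>x. x \<in> X \<Longrightarrow> f x = g x" and "x \<in> generated_subalgebra sc1 br1 X"
  shows "f x = g x"
  using generated_subalgebra_minimal[OF leibniz_subalgebra_equalizer[OF assms(1,2)]] assms(3,4)
  by blast

lemma free_leibniz_lift:
  fixes \<psi> :: "'p::ab_group_add \<Rightarrow> 'q::ab_group_add"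
  assumes free: "free_leibniz_on scF brF X TYPE('p)" and P: "leibniz_algebra scP brP"
    and \<psi>: "leibniz_hom scP brP scQ brQ \<psi>" and "surj \<psi>"
    and \<phi>: "leibniz_hom scF brF scQ brQ \<phi>"
  obtains h where "leibniz_hom scF brF scP brP h" and "\<psi> \<circ> h = \<phi>"
proof -
  obtain h where h: "leibniz_hom scF brF scP brP h" and h_X: "\<And>x. x \<in> X \<Longrightarrow> h x = inv \<psi> (\<phi> x)"
    using free P unfolding free_leibniz_on_def by (blast dest: spec[where x = "\<lambda>x. inv \<psi> (\<phi> x)"])
  have "(\<psi> \<circ> h) x = \<phi> x" for x
  proof (rule leibniz_hom_eq_on_generated[OF leibniz_hom_comp[OF h \<psi>] \<phi>])
    show "x \<in> generated_subalgebra scF brF X"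
      using free by (simp add: free_leibniz_on_def)
  qed (simp add: h_X surj_f_inv_f[OF \<open>surj \<psi>\<close>])
  then show thesis
    using h that by blast
qed

lemma leibniz_hom_vanishes_on_lie_comm:
  assumes h: "leibniz_hom sc1 br1 sc2 br2 h" and central: "h ` N \<subseteq> lie_center br2"
    and x: "x \<in> lie_comm sc1 br1 M N"
  shows "h x = 0"
proof -
  interpret Vector_Spaces.linear sc1 sc2 h using h by (simp add: leibniz_hom_def)
  show ?thesis
  proof (rule eq_0_on_span)
    show "x \<in> vs1.span {br1 a n + br1 n a |a n. a \<in> M \<and> n \<in> N}"
      using x by (simp add: lie_comm_def)
  next
    fix y assume "y \<in> {br1 a n + br1 n a |a n. a \<in> M \<and> n \<in> N}"
    then obtain a n where "y = br1 a n + br1 n a" and "n \<in> N" by blast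
    then show "h y = 0"
      using h central by (auto simp: add leibniz_hom_def lie_center_def)
  qed
qed

theorem mainTheorem11:
  fixes scF :: "'k::field \<Rightarrow> 'f::ab_group_add \<Rightarrow> 'f" and brF :: "'f \<Rightarrow> 'f \<Rightarrow> 'f"
    and scG :: "'k \<Rightarrow> 'g::ab_group_add \<Rightarrow> 'g" and brG :: "'g \<Rightarrow> 'g \<Rightarrow> 'g"
    and scP :: "'k \<Rightarrow> 'p::ab_group_add \<Rightarrow> 'p" and brP :: "'p \<Rightarrow> 'p \<Rightarrow> 'p"
    and scQ :: "'k \<Rightarrow> 'q::ab_group_add \<Rightarrow> 'q" and brQ :: "'q \<Rightarrow> 'q \<Rightarrow> 'q"
    and X :: "'f set" and r :: "'f set" and m :: "'p set"
    and \<rho> :: "'f \<Rightarrow> 'g" and \<psi> :: "'p \<Rightarrow> 'q" and \<alpha> :: "'g \<Rightarrow> 'q"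
  assumes half: "(2::'k) \<noteq> 0"
    and G: "leibniz_algebra scG brG"
    and P: "leibniz_algebra scP brP"
    and Q: "leibniz_algebra scQ brQ"
    and free: "free_leibniz_on scF brF X TYPE('p)"
    and rho_hom: "leibniz_hom scF brF scG brG \<rho>"
    and rho_surj: "surj \<rho>"
    and r_ker: "r = {x. \<rho> x = 0}"
    and psi_hom: "leibniz_hom scP brP scQ brQ \<psi>"
    and psi_surj: "surj \<psi>"
    and m_ker: "m = {x. \<psi> x = 0}"
    and m_central: "m \<subseteq> lie_center brP"
    and alpha_hom: "leibniz_hom scG brG scQ brQ \<alpha>"
  shows "\<exists>\<beta> :: 'f \<Rightarrow> 'p.
           leibniz_hom scF brF scP brP \<beta> \<and>
           (\<forall>x\<in>lie_comm scF brF UNIV r. \<beta> x = 0) \<and>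
           \<beta> ` r \<subseteq> m \<and>
           (\<forall>x. \<psi> (\<beta> x) = \<alpha> (\<rho> x))"
proof -
  obtain \<beta> where \<beta>: "leibniz_hom scF brF scP brP \<beta>" and lift: "\<psi> \<circ> \<beta> = \<alpha> \<circ> \<rho>"
    using free_leibniz_lift[OF free P psi_hom psi_surj leibniz_hom_comp[OF rho_hom alpha_hom]] .
  interpret \<alpha>: Vector_Spaces.linear scG scQ \<alpha>
    using alpha_hom by (simp add: leibniz_hom_def)
  have r_to_m: "\<beta> ` r \<subseteq> m"
    using lift \<alpha>.zero by (auto simp: r_ker m_ker fun_eq_iff)
  have "\<forall>x\<in>lie_comm scF brF UNIV r. \<beta> x = 0"
    using leibniz_hom_vanishes_on_lie_comm[OF \<beta>] r_to_m m_central by blast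
  with \<beta> r_to_m lift show ?thesis
    by (auto simp: fun_eq_iff)
qed

end
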